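(* Let $(\xi_j)_{j\ge 0}$ be independent, identically distributed random variables taking values in $\{-1,0,1\}$ with $\max_{x\in\{-1,0,1\}} \mathbb{P}(\xi_0 = x) < \frac{1}{\sqrt{3}}$, and for $n\ge 1$ let $P(z):=\sum_{j=0}^n \xi_j z^j$. There exist constants $C,c>0$ (depending only on the distribution of $\xi_0$) such that for every $n\ge1$ and every $1\le d\le n$, \[\mathbb{P}(P\text{ has a double root } \alpha \text{ with } \deg(\alpha)\ge d)\le C\exp(-cd).\]
   Context: For an algebraic integer $\alpha$, $\deg(\alpha)$ denotes its algebraic degree, i.e., the degree of its minimal polynomial (the monic polynomial in $\mathbb{Z}[x]$ of least degree having $\alpha$ as a root). The event refers to $P$ having a double root (root of multiplicity at least $2$) $\alpha$ which is an algebraic integer of degree at least $d$. *)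

theory Defs
  imports "HOL-Probability.Probability" "HOL-Computational_Algebra.Polynomial"
begin

text \<open>Algebraic degree of an algebraic integer: the degree of its minimal polynomial,
  i.e. the least degree of a monic integer polynomial having it as a root.\<close>
definition alg_degree :: "complex \<Rightarrow> nat" where
  "alg_degree \<alpha> = (LEAST k. \<exists>q :: int poly. lead_coeff q = 1 \<and> degree q = k
                              \<and> poly (map_poly of_int q) \<alpha> = 0)"

definition rand_poly :: "nat \<Rightarrow> (nat \<Rightarrow> int) \<Rightarrow> int poly" where
  "rand_poly n \<xi> = Poly (map \<xi> [0..<Suc n])"

definition double_root :: "int poly \<Rightarrow> complex \<Rightarrow> bool" where
  "double_root P \<alpha> \<longleftrightarrow> [:-\<alpha>, 1:] ^ 2 dvd map_poly of_int P"

end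

theory Submission
  imports Defs "HOL-Computational_Algebra.Polynomial_Factorial"
begin

text \<open>
  Since the coefficients lie in \<open>{-1, 0, 1}\<close>, a nonzero \<open>P\<close> has leading coefficient \<open>\<plusminus>1\<close>.
  If \<open>\<alpha>\<close> is a double root, its primitive minimal polynomial \<open>F\<close> divides both \<open>P\<close> and
  \<open>P / F\<close> (because \<open>F'(\<alpha>) \<noteq> 0\<close>), so \<open>F\<^sup>2\<close> divides \<open>P\<close>; hence \<open>F\<close> may be taken monic, of
  degree \<open>k \<ge> d\<close> with \<open>2k \<le> n\<close>. Reducing modulo 3, \<open>P\<close> is divisible by \<open>S\<^sup>2\<close> in \<open>\<int>/3[x]\<close>
  for one of \<open>3\<^sup>k\<close> monic \<open>S\<close> of degree \<open>k\<close>. For a fixed monic \<open>S\<close> of degree \<open>m\<close>, the top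
  \<open>n + 1 - m\<close> coefficients of such a \<open>P\<close> determine the others (differences lie in \<open>{-2..2}\<close>
  and vanish mod 3), so this event has probability at most \<open>q\<^sup>m\<close>, where \<open>q\<close> bounds the point
  masses. Summing \<open>3\<^sup>k q\<^sup>2\<^sup>k\<close> over \<open>k \<ge> d\<close> gives a geometric tail, as \<open>3q\<^sup>2 < 1\<close>.
\<close>

section \<open>Minimal polynomials of double roots\<close>

lemma map_poly_of_int_add:
  "map_poly (of_int :: int \<Rightarrow> 'a::comm_ring_1) (p + q) = map_poly of_int p + map_poly of_int q"
  by (rule poly_eqI) (simp add: coeff_map_poly)

lemma map_poly_of_int_mult:
  "map_poly (of_int :: int \<Rightarrow> 'a::comm_ring_1) (p * q) = map_poly of_int p * map_poly of_int q"
  by (induction p) (simp_all add: map_poly_of_int_add map_poly_smult map_poly_pCons)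

lemma map_poly_of_int_pderiv:
  "map_poly (of_int :: int \<Rightarrow> 'a::idom) (pderiv p) = pderiv (map_poly of_int p)"
  by (rule poly_eqI) (simp add: coeff_pderiv coeff_map_poly)

lemma poly_map_poly_of_int_smult:
  "poly (map_poly (of_int :: int \<Rightarrow> 'a::comm_ring_1) (smult c p)) x = of_int c * poly (map_poly of_int p) x"
  by (simp add: map_poly_smult)

lemma double_rootD:
  assumes "double_root P \<alpha>"
  shows "poly (map_poly of_int P) \<alpha> = 0" "poly (map_poly of_int (pderiv P)) \<alpha> = 0"
proof -
  from assms obtain B where B: "map_poly of_int P = [:-\<alpha>, 1:]^2 * B"
    unfolding double_root_def by (auto elim: dvdE)
  then show "poly (map_poly of_int P) \<alpha> = 0" by simp
  have "pderiv (map_poly of_int P) = [:-\<alpha>, 1:]^2 * pderiv B + B * pderiv ([:-\<alpha>, 1:]^2)"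
    by (simp only: B pderiv_mult)
  then show "poly (map_poly of_int (pderiv P)) \<alpha> = 0"
    by (simp add: map_poly_of_int_pderiv pderiv_power_Suc numeral_2_eq_2 pderiv_pCons)
qed

lemma min_degree_root_poly_dvd:
  fixes F G :: "int poly" and \<alpha> :: "'a::comm_ring_1"
  assumes "content F = 1" and "poly (map_poly of_int F) \<alpha> = 0"
    and minimal: "\<And>H. H \<noteq> 0 \<Longrightarrow> poly (map_poly of_int H) \<alpha> = 0 \<Longrightarrow> degree F \<le> degree H"
    and "poly (map_poly of_int G) \<alpha> = 0"
  shows "F dvd G"
proof -
  have "F \<noteq> 0" using assms(1) by auto
  obtain Q R where pd: "pseudo_divmod G F = (Q, R)" by (cases "pseudo_divmod G F") auto
  define a where "a = lead_coeff F ^ (Suc (degree G) - degree F)"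
  have eq: "smult a G = F * Q + R" and R: "R = 0 \<or> degree R < degree F"
    using pseudo_divmod[OF \<open>F \<noteq> 0\<close> pd] by (auto simp: a_def)
  have "poly (map_poly of_int (smult a G)) \<alpha> = poly (map_poly of_int (F * Q + R)) \<alpha>"
    by (simp only: eq)
  then have "poly (map_poly of_int R) \<alpha> = 0"
    using assms(2,4) by (simp add: map_poly_smult map_poly_of_int_add map_poly_of_int_mult)
  with R minimal have "R = 0" by force
  with eq have "F dvd smult a G" by simp
  then have "fract_poly F dvd smult (to_fract a) (fract_poly G)"
    by (metis fract_poly_dvd fract_poly_smult)
  then have "fract_poly F dvd fract_poly G"
    using \<open>F \<noteq> 0\<close> by (simp add: a_def dvd_smult_iff)
  then show "F dvd G" using assms(1) by (rule fract_poly_dvdD)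
qed

lemma obtain_min_degree_root_poly:
  fixes \<alpha> :: "'a::{idom,ring_char_0}"
  assumes "G \<noteq> 0" and "poly (map_poly of_int G) \<alpha> = 0"
  obtains F :: "int poly" where "content F = 1" and "poly (map_poly of_int F) \<alpha> = 0"
    and "\<And>H. H \<noteq> 0 \<Longrightarrow> poly (map_poly of_int H) \<alpha> = 0 \<Longrightarrow> degree F \<le> degree H"
proof -
  define root_deg where
    "root_deg k \<longleftrightarrow> (\<exists>F :: int poly. F \<noteq> 0 \<and> poly (map_poly of_int F) \<alpha> = 0 \<and> degree F = k)" for k
  have "root_deg (degree G)" using assms by (auto simp: root_deg_def)
  then have "root_deg (Least root_deg)" by (rule LeastI)
  then obtain F0 where F0: "F0 \<noteq> 0" "poly (map_poly of_int F0) \<alpha> = 0" "degree F0 = Least root_deg"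
    by (auto simp: root_deg_def)
  have "poly (map_poly of_int F0) \<alpha> = of_int (content F0) * poly (map_poly of_int (primitive_part F0)) \<alpha>"
    by (metis content_times_primitive_part poly_map_poly_of_int_smult)
  with F0 have "poly (map_poly of_int (primitive_part F0)) \<alpha> = 0" by simp
  moreover have "degree (primitive_part F0) \<le> degree H"
    if "H \<noteq> 0" "poly (map_poly of_int H) \<alpha> = 0" for H :: "int poly"
  proof -
    have "root_deg (degree H)" using that by (auto simp: root_deg_def)
    then show ?thesis using F0(3) Least_le[of root_deg] by simp
  qed
  moreover have "content (primitive_part F0) = 1" using F0(1) by simp
  ultimately show thesis using that by blast
qed

lemma double_root_monic_square_dvd:
  fixes P :: "int poly"
  assumes "double_root P \<alpha>" and "P \<noteq> 0" and "is_unit (lead_coeff P)"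
  obtains R where "lead_coeff R = 1" and "poly (map_poly of_int R) \<alpha> = 0" and "R^2 dvd P"
proof -
  note root = double_rootD[OF assms(1)]
  obtain F where F: "content F = 1" "poly (map_poly of_int F) \<alpha> = 0"
    and minimal: "\<And>H. H \<noteq> 0 \<Longrightarrow> poly (map_poly of_int H) \<alpha> = 0 \<Longrightarrow> degree F \<le> degree H"
    using obtain_min_degree_root_poly[OF assms(2) root(1)] by blast
  have F_dvd: "F dvd G" if "poly (map_poly of_int G) \<alpha> = 0" for G
    by (rule min_degree_root_poly_dvd[OF F(1,2) _ that]) (fact minimal)
  obtain A where A: "P = F * A" using F_dvd[OF root(1)] by (auto elim: dvdE)
  have "degree F \<noteq> 0"
  proof
    assume "degree F = 0"
    then obtain c where "F = [:c:]" by (metis degree_eq_zeroE)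
    with F show False by (simp add: map_poly_pCons)
  qed
  then have "pderiv F \<noteq> 0" and "degree (pderiv F) < degree F"
    by (simp_all add: pderiv_eq_0_iff degree_pderiv)
  then have F'_root: "poly (map_poly of_int (pderiv F)) \<alpha> \<noteq> 0"
    using minimal by (metis not_le)
  have "pderiv P = F * pderiv A + A * pderiv F" by (simp only: A pderiv_mult)
  then have "poly (map_poly of_int A) \<alpha> * poly (map_poly of_int (pderiv F)) \<alpha> = 0"
    using root(2) F(2) by (simp add: map_poly_of_int_add map_poly_of_int_mult)
  then obtain B where B: "A = F * B" using F_dvd F'_root by (auto elim: dvdE)
  have P_eq: "P = F^2 * B" using A B by (simp add: power2_eq_square mult.assoc)
  then have "lead_coeff P = lead_coeff F * (lead_coeff F * lead_coeff B)"
    by (simp add: lead_coeff_mult power2_eq_square)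
  then have unit: "is_unit (lead_coeff F)" using assms(3) by (metis is_unit_mult_iff)
  define R where "R = smult (lead_coeff F) F"
  have "lead_coeff F * lead_coeff F = 1" using unit by (auto simp: zdvd1_eq abs_if split: if_splits)
  moreover have "F \<noteq> 0" using F(1) by auto
  ultimately have "lead_coeff R = 1" and "R^2 = F^2"
    by (simp_all add: R_def power2_eq_square)
  moreover have "poly (map_poly of_int R) \<alpha> = 0" using F(2) by (simp add: R_def poly_map_poly_of_int_smult)
  ultimately show thesis using that P_eq by simp
qed

section \<open>Divisibility modulo an integer\<close>

text \<open>\<open>dvd_modulo m S P\<close>: \<open>S\<close> divides \<open>P\<close> in \<open>(\<int>/m)[x]\<close>.\<close>

definition dvd_modulo :: "int \<Rightarrow> int poly \<Rightarrow> int poly \<Rightarrow> bool" where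
  "dvd_modulo m S P \<longleftrightarrow> (\<exists>T U. P = S * T + smult m U)"

lemma dvd_modulo_diff:
  assumes "dvd_modulo m S P" and "dvd_modulo m S Q"
  shows "dvd_modulo m S (P - Q)"
proof -
  obtain T U T' U' where "P = S * T + smult m U" and "Q = S * T' + smult m U'"
    using assms by (auto simp: dvd_modulo_def)
  then have "P - Q = S * (T - T') + smult m (U - U')"
    by (simp add: algebra_simps smult_diff_right)
  then show ?thesis by (auto simp: dvd_modulo_def)
qed

lemma dvd_modulo_low_degree_imp_dvd_coeff:
  assumes monic: "lead_coeff S = 1" and "dvd_modulo m S D"
    and low: "\<And>i. degree S \<le> i \<Longrightarrow> coeff D i = 0"
  shows "m dvd coeff D i"
proof -
  obtain T U where D: "D = S * T + smult m U" using assms(2) by (auto simp: dvd_modulo_def)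
  have "S \<noteq> 0" using monic by auto
  obtain Q R where pd: "pseudo_divmod U S = (Q, R)" by (cases "pseudo_divmod U S") auto
  have U: "U = S * Q + R" and R: "R = 0 \<or> degree R < degree S"
    using pseudo_divmod[OF \<open>S \<noteq> 0\<close> pd] monic by auto
  define W where "W = T + smult m Q"
  have W: "D - smult m R = S * W"
    by (simp add: D U W_def algebra_simps smult_add_right)
  have "W = 0"
  proof (rule ccontr)
    assume "W \<noteq> 0"
    have "coeff (S * W) (degree S + degree W) = lead_coeff W"
      using monic by (simp add: coeff_mult_degree_sum)
    moreover have "coeff (D - smult m R) (degree S + degree W) = 0"
      using low R by (auto intro: coeff_eq_0)
    ultimately show False using W \<open>W \<noteq> 0\<close> by simp
  qed
  with W show ?thesis by simp
qed

lemma
  fixes xs :: "'a::{zero,one,zero_neq_one} list"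
  shows lead_coeff_Poly_snoc_one [simp]: "lead_coeff (Poly (xs @ [1])) = 1"
    and degree_Poly_snoc_one [simp]: "degree (Poly (xs @ [1])) = length xs"
proof -
  show deg: "degree (Poly (xs @ [1])) = length xs"
    by (rule antisym; (rule degree_le | rule le_degree)) (auto simp: nth_default_def)
  show "lead_coeff (Poly (xs @ [1])) = 1" by (simp add: deg nth_default_def)
qed

lemma square_dvd_imp_dvd_modulo_digits:
  fixes m :: int and R P :: "int poly"
  assumes "m > 0" and monic: "lead_coeff R = 1" and "R^2 dvd P"
  obtains xs where "set xs \<subseteq> {0..<m}" and "length xs = degree R"
    and "dvd_modulo m ((Poly (xs @ [1]))^2) P"
proof -
  define k where "k = degree R"
  define xs where "xs = map (\<lambda>i. coeff R i mod m) [0..<k]"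
  define R0 where "R0 = Poly (xs @ [1])"
  define V where "V = Poly (map (\<lambda>i. coeff R i div m) [0..<k])"
  have R: "R = R0 + smult m V"
  proof (rule poly_eqI)
    fix i
    show "coeff R i = coeff (R0 + smult m V) i"
      using monic coeff_eq_0[of R i]
      by (cases i k rule: linorder_cases)
         (simp_all add: R0_def V_def xs_def nth_default_def nth_append k_def)
  qed
  obtain T where "P = R^2 * T" using assms(3) by (auto elim: dvdE)
  then have "P = R0^2 * T + smult m (V * (R0 + R0 + smult m V) * T)"
    by (simp add: R power2_eq_square algebra_simps smult_add_right)
  then have "dvd_modulo m (R0^2) P" by (auto simp: dvd_modulo_def)
  moreover have "set xs \<subseteq> {0..<m}" using \<open>m > 0\<close> by (auto simp: xs_def)
  moreover have "length xs = degree R" by (simp add: xs_def k_def)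
  ultimately show thesis using that by (simp add: R0_def)
qed

section \<open>Probability estimates\<close>

lemma measure_Pi_pmf_le_if_inj_on_restrict:
  fixes p :: "'b pmf" and I L :: "'a set"
  assumes "finite I" and "finite (set_pmf p)" and "L \<subseteq> I" and "\<And>x. pmf p x \<le> q"
    and inj: "inj_on (\<lambda>f. restrict f (I - L)) (E \<inter> set_pmf (Pi_pmf I dflt (\<lambda>_. p)))"
  shows "measure_pmf.prob (Pi_pmf I dflt (\<lambda>_. p)) E \<le> q ^ card L"
proof -
  define M where "M = Pi_pmf I dflt (\<lambda>_. p)"
  define M' where "M' = Pi_pmf (I - L) dflt (\<lambda>_. p)"
  define proj where "proj f j = (if j \<in> I - L then f j else dflt)" for f :: "'a \<Rightarrow> 'b" and j
  have supp_M: "set_pmf M = PiE_dflt I dflt (\<lambda>_. set_pmf p)"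
    using assms(1) by (simp add: M_def set_Pi_pmf o_def)
  have "finite (set_pmf M)" unfolding supp_M using assms(1,2) by (rule finite_PiE_dflt)
  have "inj_on proj (E \<inter> set_pmf M)"
    using inj unfolding M_def inj_on_def restrict_def proj_def by (metis (no_types, lifting) ext)
  have pmf_le: "pmf M f \<le> q ^ card L * pmf M' (proj f)" if "f \<in> set_pmf M" for f
  proof -
    have "f j = dflt" if "j \<notin> I" for j
      using \<open>f \<in> set_pmf M\<close> that by (auto simp: supp_M PiE_dflt_def)
    then have "pmf M f = (\<Prod>j\<in>I. pmf p (f j))"
      using assms(1) by (simp add: M_def pmf_Pi')
    also have "\<dots> = (\<Prod>j\<in>L. pmf p (f j)) * (\<Prod>j\<in>I - L. pmf p (f j))"
      using assms(1,3) by (simp add: prod.subset_diff mult.commute)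
    also have "(\<Prod>j\<in>I - L. pmf p (f j)) = pmf M' (proj f)"
      using assms(1) by (auto simp: M'_def proj_def pmf_Pi intro!: prod.cong)
    also have "(\<Prod>j\<in>L. pmf p (f j)) \<le> q ^ card L"
      using prod_mono[of L "\<lambda>j. pmf p (f j)" "\<lambda>_. q"] assms(4) by simp
    finally show ?thesis by (simp add: mult_right_mono)
  qed
  have "0 \<le> q" using pmf_nonneg[of p undefined] assms(4)[of undefined] by linarith
  have "measure_pmf.prob M E = measure_pmf.prob M (E \<inter> set_pmf M)"
    by (simp add: measure_Int_set_pmf)
  also have "\<dots> = (\<Sum>f\<in>E \<inter> set_pmf M. pmf M f)"
    using \<open>finite (set_pmf M)\<close> by (simp add: measure_measure_pmf_finite)
  also have "\<dots> \<le> (\<Sum>f\<in>E \<inter> set_pmf M. q ^ card L * pmf M' (proj f))"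
    using pmf_le by (intro sum_mono) auto
  also have "\<dots> = q ^ card L * measure_pmf.prob M' (proj ` (E \<inter> set_pmf M))"
    using \<open>finite (set_pmf M)\<close> \<open>inj_on proj (E \<inter> set_pmf M)\<close>
    by (simp add: sum_distrib_left sum.reindex measure_measure_pmf_finite)
  also have "\<dots> \<le> q ^ card L"
    using \<open>0 \<le> q\<close> by (simp add: mult_left_le)
  finally show ?thesis by (simp add: M_def)
qed

lemma coeff_rand_poly: "coeff (rand_poly n \<xi>) i = (if i \<le> n then \<xi> i else 0)"
  by (auto simp: rand_poly_def nth_default_def simp del: upt_Suc)

lemma set_Pi_pmf_atLeastAtMostD:
  fixes n :: nat
  assumes "\<xi> \<in> set_pmf (Pi_pmf {0..n} 0 (\<lambda>_. p))"
  shows "j \<le> n \<Longrightarrow> \<xi> j \<in> set_pmf p" and "n < j \<Longrightarrow> \<xi> j = 0"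
  using assms by (auto simp: set_Pi_pmf PiE_dflt_def)

lemma prob_rand_poly_eq_0_le:
  assumes "finite (set_pmf p)" and "\<And>x. pmf p x \<le> q"
  shows "measure_pmf.prob (Pi_pmf {0..n} 0 (\<lambda>_. p)) {\<xi>. rand_poly n \<xi> = 0} \<le> q ^ Suc n"
proof -
  have "\<xi> = (\<lambda>_. 0)" if "\<xi> \<in> set_pmf (Pi_pmf {0..n} 0 (\<lambda>_. p))" "rand_poly n \<xi> = 0" for \<xi>
  proof
    fix j
    show "\<xi> j = 0"
      using set_Pi_pmf_atLeastAtMostD(2)[OF that(1)] arg_cong[OF that(2), of "\<lambda>P. coeff P j"]
      by (cases "j \<le> n") (auto simp: coeff_rand_poly)
  qed
  then have "inj_on (\<lambda>f. restrict f ({0..n} - {0..n}))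
      ({\<xi>. rand_poly n \<xi> = 0} \<inter> set_pmf (Pi_pmf {0..n} 0 (\<lambda>_. p)))"
    by (auto intro: inj_onI)
  from measure_Pi_pmf_le_if_inj_on_restrict[OF _ assms(1) _ assms(2) this] show ?thesis by simp
qed

lemma prob_rand_poly_dvd_modulo_3_le:
  fixes S :: "int poly"
  assumes supp: "set_pmf p \<subseteq> {-1, 0, 1}" and "\<And>x. pmf p x \<le> q"
    and monic: "lead_coeff S = 1" and "degree S \<le> n"
  shows "measure_pmf.prob (Pi_pmf {0..n} 0 (\<lambda>_. p)) {\<xi>. dvd_modulo 3 S (rand_poly n \<xi>)}
           \<le> q ^ degree S"
proof -
  define E where "E = {\<xi>. dvd_modulo 3 S (rand_poly n \<xi>)}"
  define H where "H = {0..n} - {0..<degree S}"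
  have "\<xi>1 = \<xi>2"
    if \<xi>: "\<xi>1 \<in> E \<inter> set_pmf (Pi_pmf {0..n} 0 (\<lambda>_. p))" "\<xi>2 \<in> E \<inter> set_pmf (Pi_pmf {0..n} 0 (\<lambda>_. p))"
      and high: "restrict \<xi>1 H = restrict \<xi>2 H" for \<xi>1 \<xi>2
  proof
    fix j
    define D where "D = rand_poly n \<xi>1 - rand_poly n \<xi>2"
    have coeff_D: "coeff D i = (if i \<le> n then \<xi>1 i - \<xi>2 i else 0)" for i
      by (simp add: D_def coeff_rand_poly)
    have "dvd_modulo 3 S D" using \<xi> by (simp add: D_def E_def dvd_modulo_diff)
    moreover have "coeff D i = 0" if "degree S \<le> i" for i
      using that fun_cong[OF high, of i] by (auto simp: coeff_D H_def)
    ultimately have "3 dvd coeff D j" by (rule dvd_modulo_low_degree_imp_dvd_coeff[OF monic])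
    moreover have "\<xi>1 j \<in> {-1, 0, 1}" "\<xi>2 j \<in> {-1, 0, 1}" if "j \<le> n"
      using \<xi> that supp by (auto dest!: set_Pi_pmf_atLeastAtMostD(1))
    moreover have "\<xi>1 j = 0" "\<xi>2 j = 0" if "n < j"
      using \<xi> that by (auto intro: set_Pi_pmf_atLeastAtMostD(2))
    ultimately show "\<xi>1 j = \<xi>2 j"
      by (cases "j \<le> n") (auto simp: coeff_D)
  qed
  then have "inj_on (\<lambda>f. restrict f H) (E \<inter> set_pmf (Pi_pmf {0..n} 0 (\<lambda>_. p)))"
    by (rule inj_onI)
  moreover have "finite (set_pmf p)" using supp by (rule finite_subset) simp
  moreover have "{0..<degree S} \<subseteq> {0..n}" using assms(4) by auto
  ultimately show ?thesis
    using measure_Pi_pmf_le_if_inj_on_restrict[of "{0..n}" p "{0..<degree S}" q E 0] assms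
    by (simp add: E_def H_def)
qed

lemma alg_degree_le:
  assumes "lead_coeff R = 1" and "poly (map_poly of_int R) \<alpha> = 0"
  shows "alg_degree \<alpha> \<le> degree R"
  unfolding alg_degree_def by (rule Least_le) (use assms in auto)

lemma rand_poly_double_root_imp_dvd_modulo_3:
  assumes supp: "set_pmf p \<subseteq> {-1, 0, 1}" and \<xi>: "\<xi> \<in> set_pmf (Pi_pmf {0..n} 0 (\<lambda>_. p))"
    and "rand_poly n \<xi> \<noteq> 0" and "double_root (rand_poly n \<xi>) \<alpha>" and "d \<le> alg_degree \<alpha>"
  obtains k xs where "d \<le> k" and "2 * k \<le> n" and "set xs \<subseteq> {0..<3}" and "length xs = k"
    and "dvd_modulo 3 ((Poly (xs @ [1]))^2) (rand_poly n \<xi>)"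
proof -
  define P where "P = rand_poly n \<xi>"
  have "P \<noteq> 0" using assms(3) by (simp add: P_def)
  have "degree P \<le> n"
    using \<open>P \<noteq> 0\<close> by (metis P_def coeff_rand_poly leading_coeff_0_iff not_le)
  then have "lead_coeff P \<in> {-1, 0, 1}"
    using supp set_Pi_pmf_atLeastAtMostD(1)[OF \<xi>] by (auto simp: P_def coeff_rand_poly)
  then have "is_unit (lead_coeff P)" using \<open>P \<noteq> 0\<close> by auto
  then obtain R where R: "lead_coeff R = 1" "poly (map_poly of_int R) \<alpha> = 0" "R^2 dvd P"
    using double_root_monic_square_dvd assms(4) \<open>P \<noteq> 0\<close> by (metis P_def)
  have "d \<le> degree R" using alg_degree_le[OF R(1,2)] assms(5) by simp
  moreover have "2 * degree R \<le> n"
  proof -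
    have "degree (R^2) \<le> degree P" using R(3) \<open>P \<noteq> 0\<close> by (rule dvd_imp_degree_le)
    moreover have "degree (R^2) = 2 * degree R" using R(1) degree_power_eq[of R 2] by fastforce
    ultimately show ?thesis using \<open>degree P \<le> n\<close> by simp
  qed
  moreover obtain xs where "set xs \<subseteq> {0..<3}" "length xs = degree R"
      "dvd_modulo 3 ((Poly (xs @ [1]))^2) P"
    using square_dvd_imp_dvd_modulo_digits[of 3, OF _ R(1,3)] by auto
  ultimately show thesis using that by (auto simp: P_def)
qed

lemma sum_power_atLeastAtMost_le:
  fixes \<beta> :: real
  assumes "0 \<le> \<beta>" and "\<beta> < 1"
  shows "(\<Sum>k=d..n. \<beta>^k) \<le> \<beta>^d / (1 - \<beta>)"
  using assms by (auto simp: sum_gp divide_right_mono)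

lemma prob_rand_poly_double_root_le:
  fixes \<beta> q :: real
  assumes supp: "set_pmf p \<subseteq> {-1, 0, 1}" and pmf_le: "\<And>x. pmf p x \<le> q"
    and "q \<le> \<beta>" and "3 * q^2 \<le> \<beta>" and "\<beta> < 1" and "d \<le> n"
  shows "measure_pmf.prob (Pi_pmf {0..n} 0 (\<lambda>_. p))
           {\<xi>. \<exists>\<alpha>. double_root (rand_poly n \<xi>) \<alpha> \<and> algebraic_int \<alpha> \<and> alg_degree \<alpha> \<ge> d}
         \<le> \<beta>^d + \<beta>^d / (1 - \<beta>)"
proof -
  define M where "M = Pi_pmf {0..n} 0 (\<lambda>_. p)"
  define digits where "digits k = {xs :: int list. set xs \<subseteq> {0..<3} \<and> length xs = k}" for k
  define event where "event xs = {\<xi>. dvd_modulo 3 ((Poly (xs @ [1]))^2) (rand_poly n \<xi>)}" for xs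
  define K where "K = {k. d \<le> k \<and> 2 * k \<le> n}"
  define Z where "Z = {\<xi>. rand_poly n \<xi> = 0}"
  define Ev where
    "Ev = {\<xi>. \<exists>\<alpha>. double_root (rand_poly n \<xi>) \<alpha> \<and> algebraic_int \<alpha> \<and> alg_degree \<alpha> \<ge> d}"
  have "0 \<le> q" using pmf_nonneg[of p 0] pmf_le[of 0] by linarith
  with \<open>q \<le> \<beta>\<close> have "0 \<le> \<beta>" by linarith
  have fin_p: "finite (set_pmf p)" using supp by (rule finite_subset) simp
  have "Ev \<inter> set_pmf M \<subseteq> Z \<union> (\<Union>k\<in>K. \<Union>xs\<in>digits k. event xs)"
    by (auto simp: Ev_def M_def Z_def K_def digits_def event_def
        elim!: rand_poly_double_root_imp_dvd_modulo_3[OF supp])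
  then have "measure_pmf.prob M Ev \<le> measure_pmf.prob M (Z \<union> (\<Union>k\<in>K. \<Union>xs\<in>digits k. event xs))"
    unfolding measure_Int_set_pmf[of M Ev, symmetric] by (rule measure_pmf.finite_measure_mono) simp
  also have "\<dots> \<le> measure_pmf.prob M Z + measure_pmf.prob M (\<Union>k\<in>K. \<Union>xs\<in>digits k. event xs)"
    by (rule measure_Un_le) auto
  also have "measure_pmf.prob M Z \<le> \<beta>^d"
  proof -
    have "measure_pmf.prob M Z \<le> q ^ Suc n"
      unfolding M_def Z_def by (rule prob_rand_poly_eq_0_le[OF fin_p pmf_le])
    also have "\<dots> \<le> \<beta> ^ Suc n" using \<open>0 \<le> q\<close> \<open>q \<le> \<beta>\<close> by (intro power_mono)
    also have "\<dots> \<le> \<beta>^d" using \<open>0 \<le> \<beta>\<close> \<open>\<beta> < 1\<close> \<open>d \<le> n\<close> by (intro power_decreasing) auto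
    finally show ?thesis .
  qed
  also have "measure_pmf.prob M (\<Union>k\<in>K. \<Union>xs\<in>digits k. event xs) \<le> (\<Sum>k\<in>K. \<beta>^k)"
  proof -
    have "measure_pmf.prob M (\<Union>xs\<in>digits k. event xs) \<le> \<beta>^k" if "k \<in> K" for k
    proof -
      have "measure_pmf.prob M (event xs) \<le> q ^ (2 * k)" if "xs \<in> digits k" for xs
      proof -
        have "Poly (xs @ [1]) \<noteq> 0"
          by (metis lead_coeff_Poly_snoc_one leading_coeff_0_iff zero_neq_one)
        then have "degree ((Poly (xs @ [1]))^2) = 2 * k"
          using that by (simp add: degree_power_eq digits_def)
        moreover have "lead_coeff ((Poly (xs @ [1]))^2) = 1"
          by (simp only: lead_coeff_power lead_coeff_Poly_snoc_one power_one)
        ultimately show ?thesis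
          using prob_rand_poly_dvd_modulo_3_le[OF supp pmf_le, of "(Poly (xs @ [1]))^2" n] \<open>k \<in> K\<close>
          by (simp only: M_def event_def K_def mem_Collect_eq)
      qed
      then have "measure_pmf.prob M (\<Union>xs\<in>digits k. event xs) \<le> card (digits k) * q ^ (2 * k)"
        by (intro order_trans[OF measure_pmf.finite_measure_subadditive_finite] sum_bounded_above)
           (auto simp: digits_def finite_lists_length_eq)
      also have "\<dots> = (3 * q^2) ^ k"
        by (simp add: digits_def card_lists_length_eq power_mult power_mult_distrib)
      also have "\<dots> \<le> \<beta>^k" using \<open>3 * q^2 \<le> \<beta>\<close> by (intro power_mono) simp_all
      finally show ?thesis .
    qed
    moreover have "finite K" by (rule finite_subset[of _ "{..n}"]) (auto simp: K_def)
    ultimately show ?thesis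
      by (intro order_trans[OF measure_pmf.finite_measure_subadditive_finite, OF \<open>finite K\<close>]
          sum_mono) auto
  qed
  also have "(\<Sum>k\<in>K. \<beta>^k) \<le> (\<Sum>k=d..n. \<beta>^k)"
    using \<open>0 \<le> \<beta>\<close> by (intro sum_mono2) (auto simp: K_def)
  also have "\<dots> \<le> \<beta>^d / (1 - \<beta>)"
    using \<open>0 \<le> \<beta>\<close> \<open>\<beta> < 1\<close> by (rule sum_power_atLeastAtMost_le)
  finally show ?thesis by (simp add: M_def Ev_def)
qed

theorem lemma1p3:
  fixes p :: "int pmf"
  assumes supp: "set_pmf p \<subseteq> {-1, 0, 1}"
    and small: "\<forall>x\<in>{-1, 0, 1::int}. pmf p x < 1 / sqrt 3"
  shows "\<exists>C > 0. \<exists>c > (0::real). \<forall>n d. 1 \<le> n \<longrightarrow> 1 \<le> d \<longrightarrow> d \<le> n \<longrightarrow>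
           measure_pmf.prob (Pi_pmf {0..n} 0 (\<lambda>_. p))
             {\<xi>. \<exists>\<alpha>. double_root (rand_poly n \<xi>) \<alpha> \<and> algebraic_int \<alpha> \<and> alg_degree \<alpha> \<ge> d}
           \<le> C * exp (- c * real d)"
proof -
  define q where "q = max (pmf p (-1)) (max (pmf p 0) (pmf p 1))"
  define \<beta> where "\<beta> = max (max q (3 * q^2)) (1/2)"
  have pmf_le: "pmf p x \<le> q" for x
    using supp by (cases "x \<in> set_pmf p") (auto simp: q_def set_pmf_eq le_max_iff_disj)
  have "q < 1 / sqrt 3" using small by (simp add: q_def)
  moreover have "0 \<le> q" using pmf_le[of 0] pmf_nonneg[of p 0] by linarith
  ultimately have "q^2 < 1/3" and "q < 1"
    using power_strict_mono[of q "1 / sqrt 3" 2] by (simp_all add: power_divide order.strict_trans2)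
  then have "0 < \<beta>" and "\<beta> < 1" by (auto simp: \<beta>_def)
  have "\<beta>^d = exp (- (- ln \<beta>) * real d)" for d
  proof -
    have "exp (- (- ln \<beta>) * real d) = exp (ln \<beta>) ^ d" by (simp add: exp_of_nat_mult[symmetric] mult.commute)
    then show ?thesis using \<open>0 < \<beta>\<close> by simp
  qed
  then have "measure_pmf.prob (Pi_pmf {0..n} 0 (\<lambda>_. p))
               {\<xi>. \<exists>\<alpha>. double_root (rand_poly n \<xi>) \<alpha> \<and> algebraic_int \<alpha> \<and> alg_degree \<alpha> \<ge> d}
             \<le> (1 + 1 / (1 - \<beta>)) * exp (- (- ln \<beta>) * real d)" if "d \<le> n" for n d
    using prob_rand_poly_double_root_le[OF supp pmf_le _ _ \<open>\<beta> < 1\<close> that]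
    by (simp add: \<beta>_def algebra_simps)
  moreover have "0 < 1 + 1 / (1 - \<beta>)" and "0 < - ln \<beta>"
    using \<open>0 < \<beta>\<close> \<open>\<beta> < 1\<close> by (auto intro!: add_pos_pos)
  ultimately show ?thesis by blast
qed

end
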